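(* Let $ABCD$ be a quadrilateral (a simple polygon with consecutive vertices $A,B,C,D$) such that the diagonal $AC$ lies in it and divides it into the two triangles $ABC$ and $ACD$, and these two triangles have equal area. Let $O$ be the midpoint of $AC$. Let $f\colon ABCD\to\mathbb{R}$ be a function whose restrictions to the triangles $ABC$ and $ACD$ are convex. Then $$\operatorname{Avg}(f,ABCD)\le\frac13\left(\frac{f(B)+f(D)}{2}+2\operatorname{Avg}(f,AC)\right)\le\frac13\left(\frac{f(B)+f(D)}{2}+f(A)+f(C)\right),$$ and $$\operatorname{Avg}(f,ABCD)\le\frac{f(O)}{3}+\frac23\cdot\frac{\operatorname{Avg}(f,AB)+\operatorname{Avg}(f,BC)+\operatorname{Avg}(f,CD)+\operatorname{Avg}(f,DA)}{4}\le\frac{f(O)}{3}+\frac23\cdot\frac{f(A)+f(B)+f(C)+f(D)}{4}.$$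
   Context: For a set $U$ which is a $k$-dimensional object (segment, polygon, etc.) and an integrable $f$, $\operatorname{Avg}(f,U)=\frac{1}{\operatorname{Vol}_k(U)}\int_U f$, where $\operatorname{Vol}_k$ is $k$-dimensional measure (length, area). For points $X,Y,\dots$ we write $\operatorname{Avg}(f,XY\dots)$ for $\operatorname{Avg}(f,\operatorname{conv}\{X,Y,\dots\})$; e.g. $\operatorname{Avg}(f,AC)$ is the average of $f$ over the segment $AC$ with respect to length, and $\operatorname{Avg}(f,ABCD)$ is the average over the quadrilateral with respect to area. *)

theory Defs
  imports "HOL-Analysis.Analysis"
begin

text \<open>Signed (doubled) area / orientation of the triangle P Q R in the plane.\<close>
definition orient :: "real^2 \<Rightarrow> real^2 \<Rightarrow> real^2 \<Rightarrow> real" where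
  "orient P Q R = (Q$1 - P$1) * (R$2 - P$2) - (Q$2 - P$2) * (R$1 - P$1)"

definition avg_area :: "(real^2 \<Rightarrow> real) \<Rightarrow> (real^2) set \<Rightarrow> real" where
  "avg_area f U = integral U f / measure lebesgue U"

text \<open>Average of f over the segment XY with respect to length
  (via the affine, constant-speed parametrisation of the segment).\<close>
definition avg_seg :: "(real^2 \<Rightarrow> real) \<Rightarrow> real^2 \<Rightarrow> real^2 \<Rightarrow> real" where
  "avg_seg f X Y = integral {0..1::real} (\<lambda>t. f ((1 - t) *\<^sub>R X + t *\<^sub>R Y))"

end

theory Submission
  imports Defs
begin

text \<open>
  Parametrise a triangle \<open>PXY\<close> from the vertex \<open>P\<close> by
  \<open>(s, t) \<mapsto> (1 - s) P + s ((1 - t) X + t Y)\<close> on the unit square; the Jacobian is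
  \<open>s \<bar>orient P X Y\<bar>\<close>. Convexity along each ray from \<open>P\<close> gives
  \<open>f \<le> (1 - s) f(P) + s f((1 - t) X + t Y)\<close>, and integrating over the square shows that
  the integral of \<open>f\<close> over \<open>PXY\<close> is at most \<open>area(PXY) (f(P)/3 + 2/3 Avg(f, XY))\<close>.
  Taking the apexes \<open>B\<close> and \<open>D\<close> of the two triangles over the diagonal \<open>AC\<close> gives the
  first inequality. Cutting \<open>ABC\<close> along the median \<open>OB\<close> into two halves of equal area and
  taking \<open>O\<close> as apex of both, and likewise for \<open>ACD\<close>, gives the third. The remaining two
  are the Hermite-Hadamard bound \<open>Avg(f, XY) \<le> (f(X) + f(Y))/2\<close> on each segment.
\<close>

section \<open>Orientation\<close>

lemma vec2_eq_iff: "(x::real^2) = y \<longleftrightarrow> x$1 = y$1 \<and> x$2 = y$2"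
  by (simp add: vec_eq_iff forall_2)

lemma orient_degenerate [simp]: "orient P P Q = 0" "orient P Q P = 0" "orient P Q Q = 0"
  by (simp_all add: orient_def)

lemma orient_rotate: "orient Q R P = orient P Q R"
  by (simp add: orient_def algebra_simps)

lemma orient_swap: "orient P R Q = - orient P Q R"
  by (simp add: orient_def algebra_simps)

lemma orient_barycentric:
  assumes "u + v + w = 1"
  shows "orient (u *\<^sub>R P + v *\<^sub>R X + w *\<^sub>R Y) X Y = u * orient P X Y"
    and "orient P (u *\<^sub>R P + v *\<^sub>R X + w *\<^sub>R Y) Y = v * orient P X Y"
    and "orient P X (u *\<^sub>R P + v *\<^sub>R X + w *\<^sub>R Y) = w * orient P X Y"
proof -
  have u: "u = 1 - v - w" using assms by simp
  show "orient (u *\<^sub>R P + v *\<^sub>R X + w *\<^sub>R Y) X Y = u * orient P X Y"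
    "orient P (u *\<^sub>R P + v *\<^sub>R X + w *\<^sub>R Y) Y = v * orient P X Y"
    "orient P X (u *\<^sub>R P + v *\<^sub>R X + w *\<^sub>R Y) = w * orient P X Y"
    unfolding u orient_def by (simp_all add: algebra_simps)
qed

lemma orient_sum_cevians: "orient z X Y + orient P z Y + orient P X z = orient P X Y"
  by (simp add: orient_def algebra_simps)

lemma barycentric_by_orient:
  assumes D: "orient P X Y \<noteq> 0"
  shows "z = (orient z X Y / orient P X Y) *\<^sub>R P + (orient P z Y / orient P X Y) *\<^sub>R X
           + (orient P X z / orient P X Y) *\<^sub>R Y"
proof -
  have e: "orient P X Y *\<^sub>R z = orient z X Y *\<^sub>R P + orient P z Y *\<^sub>R X + orient P X z *\<^sub>R Y"
    by (simp add: vec2_eq_iff orient_def algebra_simps)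
  have "z = (1 / orient P X Y) *\<^sub>R (orient P X Y *\<^sub>R z)" using D by simp
  also have "\<dots> = (orient z X Y / orient P X Y) *\<^sub>R P + (orient P z Y / orient P X Y) *\<^sub>R X
           + (orient P X z / orient P X Y) *\<^sub>R Y"
    unfolding e by (simp add: scaleR_add_right)
  finally show ?thesis .
qed

lemma orient_in_convex_hull_3:
  assumes "z \<in> convex hull {P, Q, R}"
  obtains w where "0 \<le> w" "w \<le> 1" "orient P Q z = w * orient P Q R"
proof -
  obtain u v w where uvw: "0 \<le> u" "0 \<le> v" "0 \<le> w" "u + v + w = 1"
    and z: "z = u *\<^sub>R P + v *\<^sub>R Q + w *\<^sub>R R"
    using assms unfolding convex_hull_3 by blast
  show thesis
    using that[of w] uvw orient_barycentric(3)[OF uvw(4), of P Q R] unfolding z by auto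
qed

lemma negligible_orient_eq_0:
  assumes "P \<noteq> Q"
  shows "negligible {z. orient P Q z = 0}"
proof -
  define a :: "real^2" where "a = vector [-(Q$2 - P$2), Q$1 - P$1]"
  have "a \<noteq> 0" using assms by (auto simp: a_def vec2_eq_iff)
  have "{z. orient P Q z = 0} = {z. a \<bullet> z = a \<bullet> P}"
    by (auto simp: a_def inner_vec_def sum_2 orient_def algebra_simps)
  then show ?thesis using negligible_hyperplane \<open>a \<noteq> 0\<close> by metis
qed

lemma negligible_convex_hull_3_Int_opposite:
  assumes opp: "orient P Q R * orient P Q S < 0"
  shows "negligible (convex hull {P, Q, R} \<inter> convex hull {P, Q, S})"
proof (rule negligible_subset[OF negligible_orient_eq_0])
  show "P \<noteq> Q" using opp by auto
  show "convex hull {P, Q, R} \<inter> convex hull {P, Q, S} \<subseteq> {z. orient P Q z = 0}"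
  proof
    fix z assume z: "z \<in> convex hull {P, Q, R} \<inter> convex hull {P, Q, S}"
    obtain w1 where w1: "0 \<le> w1" "orient P Q z = w1 * orient P Q R"
      using z orient_in_convex_hull_3 by blast
    obtain w2 where w2: "0 \<le> w2" "orient P Q z = w2 * orient P Q S"
      using z orient_in_convex_hull_3 by blast
    have "0 \<le> (orient P Q z)\<^sup>2" by simp
    also have "(orient P Q z)\<^sup>2 = (w1 * w2) * (orient P Q R * orient P Q S)"
      by (metis w1(2) w2(2) power2_eq_square mult.commute mult.left_commute)
    finally have "w1 * w2 \<le> 0" using opp by (metis mult_pos_neg not_le)
    then have "w1 = 0 \<or> w2 = 0" using w1 w2 by (auto simp: mult_le_0_iff)
    then show "z \<in> {z. orient P Q z = 0}" using w1 w2 by auto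
  qed
qed

section \<open>Convex functions on triangles and segments\<close>

lemma absolutely_integrable_bounded_continuous:
  fixes h :: "'a::euclidean_space \<Rightarrow> real"
  assumes "S \<in> lmeasurable" "continuous_on S h" "\<And>x. x \<in> S \<Longrightarrow> \<bar>h x\<bar> \<le> M"
  shows "h absolutely_integrable_on S"
  by (rule measurable_bounded_by_integrable_imp_absolutely_integrable[where g="\<lambda>_. M"])
     (use assms continuous_imp_measurable_on_sets_lebesgue integrable_on_const in auto)

text \<open>The lower bound comes from convexity through the centroid \<open>c\<close>: every \<open>z\<close> is the
  endpoint of a segment through \<open>c\<close> whose other end \<open>y\<close> is again in the triangle,
  with \<open>c = z/3 + 2y/3\<close>.\<close>

lemma convex_on_convex_hull_3_bounded:
  fixes f :: "'a::real_vector \<Rightarrow> real"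
  assumes cf: "convex_on (convex hull {P, X, Y}) f"
  obtains M where "\<And>z. z \<in> convex hull {P, X, Y} \<Longrightarrow> \<bar>f z\<bar> \<le> M"
proof -
  define M0 where "M0 = max (f P) (max (f X) (f Y))"
  have up: "\<forall>z\<in>convex hull {P, X, Y}. f z \<le> M0"
    by (rule convex_on_convex_hull_bound[OF cf]) (auto simp: M0_def)
  define c where "c = (1/3) *\<^sub>R P + (1/3) *\<^sub>R X + (1/3) *\<^sub>R Y"
  have lo: "3 * f c - 2 * M0 \<le> f z" if z: "z \<in> convex hull {P, X, Y}" for z
  proof -
    obtain u v w where uvw: "0 \<le> u" "0 \<le> v" "0 \<le> w" "u + v + w = 1"
      and zz: "z = u *\<^sub>R P + v *\<^sub>R X + w *\<^sub>R Y"
      using z unfolding convex_hull_3 by blast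
    define y where "y = ((1-u)/2) *\<^sub>R P + ((1-v)/2) *\<^sub>R X + ((1-w)/2) *\<^sub>R Y"
    have y: "y \<in> convex hull {P, X, Y}"
      unfolding convex_hull_3 mem_Collect_eq
      by (rule exI[of _ "(1-u)/2"], rule exI[of _ "(1-v)/2"], rule exI[of _ "(1-w)/2"])
         (use uvw in \<open>auto simp: y_def field_simps\<close>)
    have "(1 - 2/3) *\<^sub>R z + (2/3) *\<^sub>R y
        = (u/3 + (1-u)/3) *\<^sub>R P + (v/3 + (1-v)/3) *\<^sub>R X + (w/3 + (1-w)/3) *\<^sub>R Y"
      unfolding zz y_def
      by (simp only: scaleR_right_distrib scaleR_scaleR scaleR_add_left) (simp add: diff_divide_distrib)
    then have "c = (1 - 2/3) *\<^sub>R z + (2/3) *\<^sub>R y"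
      by (simp add: c_def add_divide_distrib[symmetric])
    then have "f c \<le> (1 - 2/3) * f z + (2/3) * f y"
      using convex_onD[OF cf, of "2/3" z y] z y by simp
    moreover have "f y \<le> M0" using up y by auto
    ultimately show ?thesis by simp
  qed
  show thesis
    by (rule that[of "\<bar>M0\<bar> + \<bar>3 * f c - 2 * M0\<bar>"]) (use up lo in force)
qed

lemma convex_on_segment_param:
  fixes f :: "'a::real_vector \<Rightarrow> real"
  assumes cf: "convex_on K f" and X: "X \<in> K" and Y: "Y \<in> K"
  shows "convex_on {0..1} (\<lambda>t. f ((1 - t) *\<^sub>R X + t *\<^sub>R Y))"
proof -
  let ?\<phi> = "\<lambda>t. f ((1 - t) *\<^sub>R X + t *\<^sub>R Y)"
  have inK: "(1 - t) *\<^sub>R X + t *\<^sub>R Y \<in> K" if "t \<in> {0..1}" for t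
    using convexD[OF convex_on_imp_convex[OF cf] X Y, of "1-t" t] that by auto
  show ?thesis
  proof (rule convex_onI)
    fix u a b :: real assume u: "0 < u" "u < 1" and ab: "a \<in> {0..1}" "b \<in> {0..1}"
    have "(1 - ((1 - u) *\<^sub>R a + u *\<^sub>R b)) *\<^sub>R X + ((1 - u) *\<^sub>R a + u *\<^sub>R b) *\<^sub>R Y
        = (1 - u) *\<^sub>R ((1 - a) *\<^sub>R X + a *\<^sub>R Y) + u *\<^sub>R ((1 - b) *\<^sub>R X + b *\<^sub>R Y)"
      by (simp add: algebra_simps)
    then show "?\<phi> ((1 - u) *\<^sub>R a + u *\<^sub>R b) \<le> (1 - u) * ?\<phi> a + u * ?\<phi> b"
      using convex_onD[OF cf, of u] inK[OF ab(1)] inK[OF ab(2)] u by simp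
  qed simp
qed

lemma absolutely_integrable_segment_param:
  fixes f :: "'a::real_vector \<Rightarrow> real"
  assumes cf: "convex_on K f" and X: "X \<in> K" and Y: "Y \<in> K"
  shows "(\<lambda>t. f ((1 - t) *\<^sub>R X + t *\<^sub>R Y)) absolutely_integrable_on {0..1}"
proof -
  let ?\<phi> = "\<lambda>t. f ((1 - t) *\<^sub>R X + t *\<^sub>R Y)"
  have c\<phi>: "convex_on {0..1} ?\<phi>" by (rule convex_on_segment_param[OF cf X Y])
  have "convex_on (convex hull {0, 1, 1}) ?\<phi>"
    using c\<phi> by (simp add: convex_hull_insert_segments closed_segment_eq_real_ivl)
  then obtain M where M: "\<And>t. t \<in> {0..1} \<Longrightarrow> \<bar>?\<phi> t\<bar> \<le> M"
    by (rule convex_on_convex_hull_3_bounded) (auto simp: convex_hull_insert_segments closed_segment_eq_real_ivl)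
  have "continuous_on {0<..<1} ?\<phi>"
    by (rule convex_on_continuous) (auto intro: convex_on_subset[OF c\<phi>])
  then have "?\<phi> absolutely_integrable_on {0<..<1}"
    by (rule absolutely_integrable_bounded_continuous[rotated, where M=M]) (use M in auto)
  then show ?thesis
    using absolutely_integrable_on_open_interval[where f="?\<phi>" and a="0::real" and b=1] by simp
qed

lemma integral_segment_param_le:
  fixes f :: "'a::real_vector \<Rightarrow> real"
  assumes cf: "convex_on K f" and X: "X \<in> K" and Y: "Y \<in> K"
  shows "integral {0..1} (\<lambda>t. f ((1 - t) *\<^sub>R X + t *\<^sub>R Y)) \<le> (f X + f Y) / 2"
proof -
  have lin: "((\<lambda>t. (1 - t) * f X + t * f Y) has_integral (f X + f Y) / 2) {0..1}"
  proof -
    have "((\<lambda>t. (1 - t) * f X + t * f Y) has_integral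
          ((\<lambda>t. t * f X - t*t/2 * f X + t*t/2 * f Y) 1 - (\<lambda>t. t * f X - t*t/2 * f X + t*t/2 * f Y) 0)) {0..1}"
      by (rule fundamental_theorem_of_calculus)
         (auto intro!: derivative_eq_intros simp: algebra_simps)
    then show ?thesis by (simp add: field_simps)
  qed
  have "integral {0..1} (\<lambda>t. f ((1 - t) *\<^sub>R X + t *\<^sub>R Y)) \<le> integral {0..1} (\<lambda>t. (1 - t) * f X + t * f Y)"
  proof (rule integral_le)
    show "(\<lambda>t. f ((1 - t) *\<^sub>R X + t *\<^sub>R Y)) integrable_on {0..1}"
      using absolutely_integrable_segment_param[OF assms] by (simp add: absolutely_integrable_on_def)
    show "(\<lambda>t. (1 - t) * f X + t * f Y) integrable_on {0..1}" using lin by blast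
    show "f ((1 - t) *\<^sub>R X + t *\<^sub>R Y) \<le> (1 - t) * f X + t * f Y" if "t \<in> {0..1}" for t
      using convex_onD[OF cf, of t X Y] that X Y by auto
  qed
  then show ?thesis using integral_unique[OF lin] by simp
qed

lemma avg_seg_convex_le:
  fixes f :: "real^2 \<Rightarrow> real"
  assumes "convex_on K f" "X \<in> K" "Y \<in> K"
  shows "avg_seg f X Y \<le> (f X + f Y) / 2"
  unfolding avg_seg_def using integral_segment_param_le[OF assms] .

section \<open>Integration over a triangle\<close>

lemma has_integral_power_unit_interval:
  "((\<lambda>t::real. t ^ n) has_integral 1 / real (Suc n)) {0<..<1}"
proof -
  have deriv: "((\<lambda>t. t ^ Suc n / real (Suc n)) has_real_derivative t ^ n) (at t)" for t :: real
    using DERIV_cdivide[OF DERIV_pow[of "Suc n" t], of "real (Suc n)"] by simp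
  have "((\<lambda>t::real. t ^ n) has_integral
          ((\<lambda>t. t ^ Suc n / real (Suc n)) 1 - (\<lambda>t. t ^ Suc n / real (Suc n)) 0)) {0..1}"
    by (rule fundamental_theorem_of_calculus, simp,
        rule has_real_derivative_iff_has_vector_derivative[THEN iffD1],
        rule has_field_derivative_at_within[OF deriv])
  then show ?thesis by (simp add: has_integral_Icc_iff_Ioo)
qed

lemma nn_integral_lborel_vec2_product:
  fixes A B :: "real \<Rightarrow> real"
  assumes [measurable]: "A \<in> borel_measurable borel" "B \<in> borel_measurable borel"
    and A0: "\<And>t. 0 \<le> A t" and B0: "\<And>t. 0 \<le> B t"
  shows "(\<integral>\<^sup>+x. ennreal (A ((x::real^2)$1) * B (x$2)) \<partial>lborel)
           = (\<integral>\<^sup>+t. ennreal (A t) \<partial>lborel) * (\<integral>\<^sup>+t. ennreal (B t) \<partial>lborel)"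
proof -
  have Basis2: "(Basis :: (real^2) set) = {axis 1 1, axis 2 1}"
    by (auto simp: Basis_vec_def UNIV_2)
  have axis12: "axis 1 (1::real) \<noteq> (axis 2 1 :: real^2)"
    by (simp add: axis_eq_axis)
  define F :: "real^2 \<Rightarrow> real \<Rightarrow> ennreal" where
    "F c t = (if c = axis 1 1 then ennreal (A t) else ennreal (B t))" for c t
  have "(\<integral>\<^sup>+x. (\<Prod>c\<in>Basis. F c (x \<bullet> c)) \<partial>lborel) = (\<Prod>c\<in>Basis. (\<integral>\<^sup>+x. F c x \<partial>lborel))"
    by (rule nn_integral_lborel_prod) (auto simp: F_def)
  then show ?thesis
    by (simp add: Basis2 axis12 axis12[symmetric] F_def cart_eq_inner_axis ennreal_mult A0 B0)
qed

text \<open>Proved by Tonelli, hence the sign conditions.\<close>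

lemma has_integral_unit_square_product:
  fixes a b :: "real \<Rightarrow> real"
  assumes ca: "continuous_on {0<..<1} a" and cb: "continuous_on {0<..<1} b"
    and a0: "\<And>t. t \<in> {0<..<1} \<Longrightarrow> 0 \<le> a t" and b0: "\<And>t. t \<in> {0<..<1} \<Longrightarrow> 0 \<le> b t"
    and ia: "(a has_integral Ia) {0<..<1}" and ib: "(b has_integral Ib) {0<..<1}"
  shows "((\<lambda>x::real^2. a (x$1) * b (x$2)) has_integral (Ia * Ib)) (box 0 1)"
proof -
  define A where "A t = indicator {0<..<1::real} t *\<^sub>R a t" for t
  define B where "B t = indicator {0<..<1::real} t *\<^sub>R b t" for t
  have Am: "A \<in> borel_measurable borel"
    unfolding A_def by (rule borel_measurable_continuous_on_indicator) (use ca in auto)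
  have Bm: "B \<in> borel_measurable borel"
    unfolding B_def by (rule borel_measurable_continuous_on_indicator) (use cb in auto)
  have A0: "0 \<le> A t" for t using a0 by (auto simp: A_def indicator_def)
  have B0: "0 \<le> B t" for t using b0 by (auto simp: B_def indicator_def)
  have "A = (\<lambda>t. if t \<in> {0<..<1} then a t else 0)" "B = (\<lambda>t. if t \<in> {0<..<1} then b t else 0)"
    by (auto simp: A_def B_def indicator_def)
  then have AI: "(A has_integral Ia) UNIV" and BI: "(B has_integral Ib) UNIV"
    using ia ib by (simp_all only: has_integral_restrict_UNIV)
  have Ia0: "0 \<le> Ia" using has_integral_nonneg[OF AI] A0 by auto
  have Ib0: "0 \<le> Ib" using has_integral_nonneg[OF BI] B0 by auto
  have "(\<integral>\<^sup>+x. ennreal (A ((x::real^2)$1) * B (x$2)) \<partial>lborel) = ennreal (Ia * Ib)"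
    using nn_integral_lborel_vec2_product[OF Am Bm A0 B0] Ia0 Ib0
      nn_integral_has_integral_lborel[OF Am A0 AI] nn_integral_has_integral_lborel[OF Bm B0 BI]
    by (simp add: ennreal_mult)
  then have "((\<lambda>x::real^2. A (x$1) * B (x$2)) has_integral (Ia * Ib)) UNIV"
    by (intro nn_integral_has_integral) (use Am Bm A0 B0 Ia0 Ib0 in auto)
  moreover have "(\<lambda>x::real^2. A (x$1) * B (x$2))
      = (\<lambda>x. if x \<in> box 0 1 then a (x$1) * b (x$2) else 0)"
    by (auto simp: A_def B_def indicator_def mem_box_cart forall_2)
  ultimately show ?thesis by (simp add: has_integral_restrict_UNIV)
qed

definition cone_param :: "real^2 \<Rightarrow> real^2 \<Rightarrow> real^2 \<Rightarrow> real^2 \<Rightarrow> real^2" where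
  "cone_param P X Y x = (1 - x$1) *\<^sub>R P + x$1 *\<^sub>R ((1 - x$2) *\<^sub>R X + x$2 *\<^sub>R Y)"

definition cone_param_deriv :: "real^2 \<Rightarrow> real^2 \<Rightarrow> real^2 \<Rightarrow> real^2 \<Rightarrow> real^2 \<Rightarrow> real^2" where
  "cone_param_deriv P X Y x h = (-(h$1)) *\<^sub>R P + h$1 *\<^sub>R ((1 - x$2) *\<^sub>R X + x$2 *\<^sub>R Y)
                    + x$1 *\<^sub>R ((-(h$2)) *\<^sub>R X + h$2 *\<^sub>R Y)"

text \<open>The interior of the triangle \<open>PXY\<close>: the points strictly on the same side of each edge
  as the opposite vertex. It is empty if the triangle is degenerate.\<close>

definition open_triangle :: "real^2 \<Rightarrow> real^2 \<Rightarrow> real^2 \<Rightarrow> (real^2) set" where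
  "open_triangle P X Y = {z. 0 < orient z X Y * orient P X Y \<and> 0 < orient P z Y * orient P X Y
                            \<and> 0 < orient P X z * orient P X Y}"

lemma open_open_triangle: "open (open_triangle P X Y)"
  unfolding open_triangle_def Collect_conj_eq orient_def
  by (intro open_Int open_Collect_less continuous_intros)

lemma open_triangle_eq:
  assumes D: "orient P X Y \<noteq> 0"
  shows "open_triangle P X Y =
    {u *\<^sub>R P + v *\<^sub>R X + w *\<^sub>R Y | u v w. 0 < u \<and> 0 < v \<and> 0 < w \<and> u + v + w = 1}"
proof -
  have DD: "0 < orient P X Y * orient P X Y" using D by (metis not_real_square_gt_zero)
  show ?thesis
  proof (intro equalityI subsetI)
    fix z assume z: "z \<in> open_triangle P X Y"
    define u where "u = orient z X Y / orient P X Y"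
    define v where "v = orient P z Y / orient P X Y"
    define w where "w = orient P X z / orient P X Y"
    have "0 < u" "0 < v" "0 < w"
      using z unfolding open_triangle_def u_def v_def w_def
      by (auto simp: zero_less_divide_iff zero_less_mult_iff)
    moreover have "u + v + w = 1"
      unfolding u_def v_def w_def using D orient_sum_cevians[of z X Y P]
      by (simp add: add_divide_distrib[symmetric])
    moreover have "z = u *\<^sub>R P + v *\<^sub>R X + w *\<^sub>R Y"
      using barycentric_by_orient[OF D, of z] by (simp add: u_def v_def w_def)
    ultimately show "z \<in> {u *\<^sub>R P + v *\<^sub>R X + w *\<^sub>R Y | u v w. 0 < u \<and> 0 < v \<and> 0 < w \<and> u + v + w = 1}"
      by blast
  next
    fix z assume "z \<in> {u *\<^sub>R P + v *\<^sub>R X + w *\<^sub>R Y | u v w. 0 < u \<and> 0 < v \<and> 0 < w \<and> u + v + w = 1}"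
    then obtain u v w where "0 < u" "0 < v" "0 < w" "u + v + w = 1"
      and "z = u *\<^sub>R P + v *\<^sub>R X + w *\<^sub>R Y" by blast
    then show "z \<in> open_triangle P X Y"
      using DD by (simp add: open_triangle_def orient_barycentric mult.assoc)
  qed
qed

lemma open_triangle_subset_convex_hull_3:
  assumes "orient P X Y \<noteq> 0"
  shows "open_triangle P X Y \<subseteq> convex hull {P, X, Y}"
  unfolding open_triangle_eq[OF assms] convex_hull_3 by force

lemma negligible_convex_hull_3_diff_open_triangle:
  assumes D: "orient P X Y \<noteq> 0"
  shows "negligible (convex hull {P, X, Y} - open_triangle P X Y)"
proof (rule negligible_subset)
  show "negligible ({z. orient X Y z = 0} \<union> {z. orient P Y z = 0} \<union> {z. orient P X z = 0})"
    using D by (auto intro: negligible_orient_eq_0)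
  show "convex hull {P, X, Y} - open_triangle P X Y \<subseteq>
        {z. orient X Y z = 0} \<union> {z. orient P Y z = 0} \<union> {z. orient P X z = 0}"
  proof
    fix z assume z: "z \<in> convex hull {P, X, Y} - open_triangle P X Y"
    obtain u v w where uvw: "0 \<le> u" "0 \<le> v" "0 \<le> w" "u + v + w = 1"
      and zz: "z = u *\<^sub>R P + v *\<^sub>R X + w *\<^sub>R Y"
      using z unfolding convex_hull_3 by blast
    have "\<not> (0 < u \<and> 0 < v \<and> 0 < w)"
      using z uvw zz unfolding open_triangle_eq[OF D] by blast
    then have "u = 0 \<or> v = 0 \<or> w = 0" using uvw by auto
    then show "z \<in> {z. orient X Y z = 0} \<union> {z. orient P Y z = 0} \<union> {z. orient P X z = 0}"
      using orient_barycentric[OF uvw(4), of P X Y] orient_rotate[of X Y z] orient_swap[of P z Y]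
      unfolding zz by auto
  qed
qed

lemma cone_param_barycentric:
  "cone_param P X Y x = (1 - x$1) *\<^sub>R P + (x$1 * (1 - x$2)) *\<^sub>R X + (x$1 * x$2) *\<^sub>R Y"
  by (simp add: cone_param_def algebra_simps)

lemma orient_cone_param:
  "orient (cone_param P X Y x) X Y = (1 - x$1) * orient P X Y"
  "orient P X (cone_param P X Y x) = (x$1 * x$2) * orient P X Y"
  unfolding cone_param_barycentric by (rule orient_barycentric; simp add: algebra_simps)+

lemma cone_param_image:
  assumes D: "orient P X Y \<noteq> 0"
  shows "cone_param P X Y ` box 0 1 = open_triangle P X Y"
proof (intro equalityI subsetI)
  fix z assume "z \<in> cone_param P X Y ` box 0 1"
  then obtain x where x: "0 < x$1" "x$1 < 1" "0 < x$2" "x$2 < 1" and z: "z = cone_param P X Y x"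
    by (auto simp: mem_box_cart forall_2)
  then show "z \<in> open_triangle P X Y"
    unfolding open_triangle_eq[OF D] cone_param_barycentric
    by (intro CollectI exI[of _ "1 - x$1"] exI[of _ "x$1 * (1 - x$2)"] exI[of _ "x$1 * x$2"] conjI)
       (auto simp: algebra_simps)
next
  fix z assume "z \<in> open_triangle P X Y"
  then obtain u v w where uvw: "0 < u" "0 < v" "0 < w" "u + v + w = 1"
    and z: "z = u *\<^sub>R P + v *\<^sub>R X + w *\<^sub>R Y"
    unfolding open_triangle_eq[OF D] by blast
  define x :: "real^2" where "x = vector [v + w, w / (v + w)]"
  have x1: "x$1 = v + w" and x2: "x$2 = w / (v + w)" by (simp_all add: x_def)
  have "x \<in> box 0 1" using uvw by (auto simp: mem_box_cart forall_2 x1 x2 field_simps)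
  moreover have "cone_param P X Y x = z"
  proof -
    have "1 - x$1 = u" "x$1 * (1 - x$2) = v" "x$1 * x$2 = w"
      using uvw by (simp_all add: x1 x2 field_simps)
    then show ?thesis unfolding cone_param_barycentric z by simp
  qed
  ultimately show "z \<in> cone_param P X Y ` box 0 1" by blast
qed

lemma inj_on_cone_param:
  assumes D: "orient P X Y \<noteq> 0"
  shows "inj_on (cone_param P X Y) (box 0 1)"
proof
  fix x y :: "real^2"
  assume x: "x \<in> box 0 1" and "cone_param P X Y x = cone_param P X Y y"
  then have "(1 - x$1) * orient P X Y = (1 - y$1) * orient P X Y"
    and "(x$1 * x$2) * orient P X Y = (y$1 * y$2) * orient P X Y"
    by (metis orient_cone_param)+
  moreover have "0 < x$1" using x by (auto simp: mem_box_cart)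
  ultimately show "x = y" using D by (simp add: vec2_eq_iff)
qed

lemma cone_param_has_derivative:
  "(cone_param P X Y has_derivative cone_param_deriv P X Y x) (at x within S)"
  unfolding cone_param_def[abs_def] cone_param_deriv_def[abs_def]
  by (auto intro!: derivative_eq_intros bounded_linear.has_derivative[OF bounded_linear_vec_nth]
           simp: fun_eq_iff algebra_simps)

lemma det_cone_param_deriv: "det (matrix (cone_param_deriv P X Y x)) = x$1 * orient P X Y"
  by (simp add: det_2 matrix_def cone_param_deriv_def axis_def orient_def algebra_simps)

lemma has_absolute_integral_change_of_variables_real:
  fixes g :: "real^2 \<Rightarrow> real^2" and h :: "real^2 \<Rightarrow> real"
  assumes S: "S \<in> sets lebesgue"
    and der: "\<And>x. x \<in> S \<Longrightarrow> (g has_derivative g' x) (at x within S)"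
    and inj: "inj_on g S"
    and ai: "(\<lambda>x. \<bar>det (matrix (g' x))\<bar> * h (g x)) absolutely_integrable_on S"
  shows "h absolutely_integrable_on (g ` S)"
    and "integral (g ` S) h = integral S (\<lambda>x. \<bar>det (matrix (g' x))\<bar> * h (g x))"
proof -
  define H :: "real^2 \<Rightarrow> real^1" where "H z = vec (h z)" for z
  let ?I = "integral S (\<lambda>x. \<bar>det (matrix (g' x))\<bar> * h (g x))"
  have "(\<lambda>x. \<bar>det (matrix (g' x))\<bar> *\<^sub>R H (g x)) absolutely_integrable_on S"
    using ai by (simp add: absolutely_integrable_on_1_iff H_def)
  moreover have "integral S (\<lambda>x. \<bar>det (matrix (g' x))\<bar> *\<^sub>R H (g x)) = vec ?I"
    by (subst integral_on_1_eq) (simp add: H_def)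
  ultimately have "H absolutely_integrable_on (g ` S) \<and> integral (g ` S) H = vec ?I"
    using has_absolute_integral_change_of_variables[OF S der inj, of H "vec ?I"] by blast
  moreover have "integral (g ` S) H = vec (integral (g ` S) h)"
    by (subst integral_on_1_eq) (simp add: H_def)
  ultimately show "h absolutely_integrable_on (g ` S)" "integral (g ` S) h = ?I"
    by (simp_all add: absolutely_integrable_on_1_iff H_def vec_eq)
qed

lemma lmeasurable_convex_hull_3: "convex hull {P, X, Y :: 'a::euclidean_space} \<in> lmeasurable"
  by (simp add: lmeasurable_compact finite_imp_compact_convex_hull)

lemma absolutely_integrable_cone_param_jacobian:
  fixes h :: "real^2 \<Rightarrow> real"
  assumes D: "orient P X Y \<noteq> 0"
    and cont: "continuous_on (open_triangle P X Y) h"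
    and bnd: "\<And>z. z \<in> open_triangle P X Y \<Longrightarrow> \<bar>h z\<bar> \<le> M"
  shows "(\<lambda>x. \<bar>det (matrix (cone_param_deriv P X Y x))\<bar> * h (cone_param P X Y x))
           absolutely_integrable_on box 0 1"
  unfolding det_cone_param_deriv
proof (rule absolutely_integrable_bounded_continuous[where M="1 * \<bar>orient P X Y\<bar> * M"])
  let ?S = "box 0 (1::real^2)"
  have maps: "cone_param P X Y x \<in> open_triangle P X Y" if "x \<in> ?S" for x
    using that cone_param_image[OF D] by blast
  show "?S \<in> lmeasurable" by simp
  have "continuous_on ?S (cone_param P X Y)"
    unfolding cone_param_def[abs_def] by (intro continuous_intros)
  then show "continuous_on ?S (\<lambda>x. \<bar>x$1 * orient P X Y\<bar> * h (cone_param P X Y x))"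
    by (intro continuous_intros continuous_on_compose2[OF cont]) (use maps in auto)
  fix x assume x: "x \<in> ?S"
  then have "\<bar>x$1\<bar> \<le> 1" by (auto simp: mem_box_cart forall_2 abs_le_iff dest: spec[of _ 1])
  then have "\<bar>x$1\<bar> * \<bar>orient P X Y\<bar> * \<bar>h (cone_param P X Y x)\<bar> \<le> 1 * \<bar>orient P X Y\<bar> * M"
    using bnd[OF maps[OF x]] by (intro mult_mono mult_right_mono) auto
  then show "\<bar>\<bar>x$1 * orient P X Y\<bar> * h (cone_param P X Y x)\<bar> \<le> 1 * \<bar>orient P X Y\<bar> * M"
    by (simp add: abs_mult)
qed

lemma integral_convex_hull_3_cone_param:
  fixes h :: "real^2 \<Rightarrow> real"
  assumes D: "orient P X Y \<noteq> 0"
    and cont: "continuous_on (open_triangle P X Y) h"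
    and bnd: "\<And>z. z \<in> open_triangle P X Y \<Longrightarrow> \<bar>h z\<bar> \<le> M"
  shows "h absolutely_integrable_on convex hull {P, X, Y}"
    and "((\<lambda>x. x$1 * \<bar>orient P X Y\<bar> * h (cone_param P X Y x))
           has_integral integral (convex hull {P, X, Y}) h) (box 0 1)"
proof -
  let ?S = "box 0 (1::real^2)" and ?T = "open_triangle P X Y" and ?K = "convex hull {P, X, Y}"
  note ai = absolutely_integrable_cone_param_jacobian[OF D cont bnd]
  note cov = has_absolute_integral_change_of_variables_real[OF _ cone_param_has_derivative
      inj_on_cone_param[OF D] ai, unfolded cone_param_image[OF D], simplified]
  have N1: "negligible {x \<in> ?K - ?T. h x \<noteq> 0}"
    by (rule negligible_subset[OF negligible_convex_hull_3_diff_open_triangle[OF D]]) auto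
  have N2: "negligible {x \<in> ?T - ?K. h x \<noteq> 0}"
    by (rule negligible_subset[of "{}"]) (use open_triangle_subset_convex_hull_3[OF D] in auto)
  show "h absolutely_integrable_on ?K"
    using cov(1) absolutely_integrable_spike_set_eq[OF N1 N2] by simp
  have "integral ?K h = integral ?T h" by (rule integral_spike_set[OF N1 N2])
  also have "\<dots> = integral ?S (\<lambda>x. \<bar>det (matrix (cone_param_deriv P X Y x))\<bar> * h (cone_param P X Y x))"
    by (rule cov(2))
  finally have "((\<lambda>x. \<bar>det (matrix (cone_param_deriv P X Y x))\<bar> * h (cone_param P X Y x))
      has_integral integral ?K h) ?S"
    using ai by (simp add: absolutely_integrable_on_def integrable_integral)
  then show "((\<lambda>x. x$1 * \<bar>orient P X Y\<bar> * h (cone_param P X Y x)) has_integral integral ?K h) ?S"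
    by (rule has_integral_cong[THEN iffD1, rotated])
       (auto simp: det_cone_param_deriv abs_mult mem_box_cart forall_2)
qed

lemma measure_convex_hull_3:
  assumes D: "orient P X Y \<noteq> 0"
  shows "measure lebesgue (convex hull {P, X, Y}) = \<bar>orient P X Y\<bar> / 2"
proof -
  have lin: "((\<lambda>t. t * \<bar>orient P X Y\<bar>) has_integral \<bar>orient P X Y\<bar> / 2) {0<..<1}"
    using has_integral_mult_left[OF has_integral_power_unit_interval[of 1]] by simp
  have one: "((\<lambda>t::real. 1) has_integral (1::real)) {0<..<1}"
    using has_integral_power_unit_interval[of 0] by simp
  have "measure lebesgue (convex hull {P, X, Y}) = integral (convex hull {P, X, Y}) (\<lambda>_. 1::real)"
    by (rule lmeasure_integral[OF lmeasurable_convex_hull_3])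
  also have "\<dots> = \<bar>orient P X Y\<bar> / 2 * 1"
  proof (rule has_integral_unique)
    show "((\<lambda>x::real^2. x$1 * \<bar>orient P X Y\<bar> * 1) has_integral
            integral (convex hull {P, X, Y}) (\<lambda>_. 1::real)) (box 0 1)"
      by (rule integral_convex_hull_3_cone_param(2)[where h="\<lambda>_. 1" and M=1, OF D]) auto
    show "((\<lambda>x::real^2. x$1 * \<bar>orient P X Y\<bar> * 1) has_integral \<bar>orient P X Y\<bar> / 2 * 1) (box 0 1)"
      by (rule has_integral_unit_square_product[OF _ _ _ _ lin one])
         (auto intro!: continuous_intros simp: has_integral_Icc_iff_Ioo[symmetric])
  qed
  finally show ?thesis by simp
qed

text \<open>The shift by \<open>M\<close> in the proof makes the integrands nonnegative, as Tonelli requires.\<close>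

lemma has_integral_cone_majorant:
  fixes \<phi> :: "real \<Rightarrow> real"
  assumes cont: "continuous_on {0<..<1} \<phi>" and int: "(\<phi> has_integral I) {0<..<1}"
    and lower: "\<And>t. t \<in> {0<..<1} \<Longrightarrow> - M \<le> \<phi> t"
  shows "((\<lambda>x::real^2. c * ((x$1 - x$1^2) * a + x$1^2 * \<phi> (x$2)))
           has_integral c * (a / 6 + I / 3)) (box 0 1)"
proof -
  have lin: "((\<lambda>t::real. t) has_integral 1/2) {0<..<1}"
    and sq: "((\<lambda>t::real. t^2) has_integral 1/3) {0<..<1}"
    and one: "((\<lambda>t::real. 1) has_integral (1::real)) {0<..<1}"
    and const: "((\<lambda>t::real. M) has_integral M) {0<..<1}"
    using has_integral_power_unit_interval[of 1] has_integral_power_unit_interval[of 2]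
      has_integral_power_unit_interval[of 0] has_integral_const_real[of M 0 1]
    by (simp_all add: numeral_2_eq_2 has_integral_Icc_iff_Ioo)
  have shift: "0 \<le> \<phi> t + M" if "t \<in> {0<..<1}" for t
    using lower[OF that] by simp
  have "((\<lambda>x::real^2. c * a * ((x$1 - x$1^2) * 1) + c * (x$1^2 * (\<phi> (x$2) + M)) - c * M * (x$1^2 * 1))
      has_integral c * a * ((1/2 - 1/3) * 1) + c * (1/3 * (I + M)) - c * M * (1/3 * 1)) (box 0 1)"
    (is "(?R has_integral _) _")
    by (intro has_integral_diff has_integral_add has_integral_mult_right
          has_integral_unit_square_product lin sq one int const)
       (auto intro!: continuous_intros cont shift simp: power2_eq_square mult_le_cancel_left1)
  moreover have "c * a * ((1/2 - 1/3) * 1) + c * (1/3 * (I + M)) - c * M * (1/3 * 1)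
      = c * (a / 6 + I / 3)"
    by (simp add: field_simps)
  ultimately have "(?R has_integral c * (a / 6 + I / 3)) (box 0 1)" by simp
  then show ?thesis by (simp add: algebra_simps)
qed

lemma continuous_on_open_triangle_convex:
  assumes D: "orient P X Y \<noteq> 0" and cf: "convex_on (convex hull {P, X, Y}) f"
  shows "continuous_on (open_triangle P X Y) f"
proof (rule continuous_on_subset)
  show "continuous_on (interior (convex hull {P, X, Y})) f"
    by (intro convex_on_continuous convex_on_subset[OF cf interior_subset]) auto
  show "open_triangle P X Y \<subseteq> interior (convex hull {P, X, Y})"
    using open_triangle_subset_convex_hull_3[OF D] open_open_triangle by (rule interior_maximal)
qed

lemma convex_on_cone_param_le:
  assumes cf: "convex_on (convex hull {P, X, Y}) f" and "x \<in> box 0 1"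
  shows "f (cone_param P X Y x) \<le> (1 - x$1) * f P + x$1 * f ((1 - x$2) *\<^sub>R X + x$2 *\<^sub>R Y)"
proof -
  have x: "0 < x$1" "x$1 < 1" "0 < x$2" "x$2 < 1"
    using \<open>x \<in> box 0 1\<close> by (auto simp: mem_box_cart forall_2)
  then have "(1 - x$2) *\<^sub>R X + x$2 *\<^sub>R Y \<in> convex hull {P, X, Y}"
    by (intro convexD convex_convex_hull) (auto simp: hull_inc)
  then show ?thesis
    unfolding cone_param_def using x by (intro convex_onD[OF cf]) (auto simp: hull_inc)
qed

lemma integral_convex_triangle_le:
  fixes f :: "real^2 \<Rightarrow> real"
  assumes D: "orient P X Y \<noteq> 0" and cf: "convex_on (convex hull {P, X, Y}) f"
  shows "f absolutely_integrable_on convex hull {P, X, Y}"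
    and "integral (convex hull {P, X, Y}) f
           \<le> measure lebesgue (convex hull {P, X, Y}) * (f P / 3 + 2/3 * avg_seg f X Y)"
proof -
  let ?K = "convex hull {P, X, Y}" and ?D = "\<bar>orient P X Y\<bar>"
  define \<phi> where "\<phi> t = f ((1 - t) *\<^sub>R X + t *\<^sub>R Y)" for t
  obtain M where M: "\<And>z. z \<in> ?K \<Longrightarrow> \<bar>f z\<bar> \<le> M"
    using convex_on_convex_hull_3_bounded[OF cf] by blast
  have XK: "X \<in> ?K" and YK: "Y \<in> ?K" by (auto simp: hull_inc)
  note param = integral_convex_hull_3_cone_param[OF D continuous_on_open_triangle_convex[OF D cf]
      M[OF open_triangle_subset_convex_hull_3[OF D, THEN subsetD]]]
  show "f absolutely_integrable_on ?K" by (rule param(1))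
  have \<phi>_cont: "continuous_on {0<..<1} \<phi>"
    unfolding \<phi>_def[abs_def]
    by (intro convex_on_continuous convex_on_subset[OF convex_on_segment_param[OF cf XK YK]]) auto
  have "\<phi> integrable_on {0..1}"
    using absolutely_integrable_segment_param[OF cf XK YK]
    by (simp add: \<phi>_def[abs_def] absolutely_integrable_on_def)
  then have \<phi>_int: "(\<phi> has_integral avg_seg f X Y) {0<..<1}"
    unfolding avg_seg_def \<phi>_def[symmetric] has_integral_Icc_iff_Ioo[symmetric]
    by (rule integrable_integral)
  have \<phi>_lower: "- M \<le> \<phi> t" if "t \<in> {0<..<1}" for t
    using that convexD[OF convex_convex_hull XK YK, of "1 - t" t] M[of "(1 - t) *\<^sub>R X + t *\<^sub>R Y"]
    by (auto simp: \<phi>_def)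
  have "integral ?K f \<le> ?D * (f P / 6 + avg_seg f X Y / 3)"
  proof (rule has_integral_le[OF param(2) has_integral_cone_majorant[OF \<phi>_cont \<phi>_int \<phi>_lower]])
    fix x :: "real^2" assume x: "x \<in> box 0 1"
    then have "x$1 * ?D * f (cone_param P X Y x) \<le> x$1 * ?D * ((1 - x$1) * f P + x$1 * \<phi> (x$2))"
      unfolding \<phi>_def by (intro mult_left_mono convex_on_cone_param_le[OF cf])
        (auto simp: mem_box_cart forall_2)
    then show "x$1 * ?D * f (cone_param P X Y x) \<le> ?D * ((x$1 - x$1^2) * f P + x$1^2 * \<phi> (x$2))"
      by (simp add: power2_eq_square algebra_simps)
  qed
  then show "integral ?K f \<le> measure lebesgue ?K * (f P / 3 + 2/3 * avg_seg f X Y)"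
    by (simp add: measure_convex_hull_3[OF D] algebra_simps)
qed

lemma convex_hull_3_split_midpoint:
  fixes A B C :: "real^2"
  shows "convex hull {A, B, C} = convex hull {midpoint A C, A, B} \<union> convex hull {midpoint A C, B, C}"
proof (intro equalityI subsetI)
  fix z assume "z \<in> convex hull {A, B, C}"
  then obtain a b c where abc: "0 \<le> a" "0 \<le> b" "0 \<le> c" "a + b + c = 1"
    and z: "z = a *\<^sub>R A + b *\<^sub>R B + c *\<^sub>R C"
    unfolding convex_hull_3 by blast
  show "z \<in> convex hull {midpoint A C, A, B} \<union> convex hull {midpoint A C, B, C}"
  proof (cases "c \<le> a")
    case True
    have "z = (2*c) *\<^sub>R midpoint A C + (a - c) *\<^sub>R A + b *\<^sub>R B"
      by (simp add: z midpoint_def vec2_eq_iff algebra_simps)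
    then have "z \<in> convex hull {midpoint A C, A, B}"
      unfolding convex_hull_3 using abc True by force
    then show ?thesis by blast
  next
    case False
    have "z = (2*a) *\<^sub>R midpoint A C + b *\<^sub>R B + (c - a) *\<^sub>R C"
      by (simp add: z midpoint_def vec2_eq_iff algebra_simps)
    then have "z \<in> convex hull {midpoint A C, B, C}"
      unfolding convex_hull_3 using abc False by force
    then show ?thesis by blast
  qed
next
  fix z assume "z \<in> convex hull {midpoint A C, A, B} \<union> convex hull {midpoint A C, B, C}"
  moreover have "midpoint A C \<in> convex hull {A, B, C}"
    using convexD[OF convex_convex_hull, of A "{A, B, C}" C "1/2" "1/2"]
    by (simp add: hull_inc midpoint_def scaleR_right_distrib)
  then have "convex hull {midpoint A C, A, B} \<subseteq> convex hull {A, B, C}"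
    and "convex hull {midpoint A C, B, C} \<subseteq> convex hull {A, B, C}"
    by (simp_all add: hull_minimal hull_inc convex_convex_hull)
  ultimately show "z \<in> convex hull {A, B, C}" by blast
qed

lemma integral_convex_triangle_le_midpoint:
  fixes f :: "real^2 \<Rightarrow> real"
  assumes D: "orient A B C \<noteq> 0" and cf: "convex_on (convex hull {A, B, C}) f"
  shows "integral (convex hull {A, B, C}) f \<le> measure lebesgue (convex hull {A, B, C}) *
           (f (midpoint A C) / 3 + (avg_seg f A B + avg_seg f B C) / 3)"
proof -
  define Mid where "Mid = midpoint A C"
  let ?H = "convex hull {A, B, C}" and ?T1 = "convex hull {Mid, A, B}" and ?T2 = "convex hull {Mid, B, C}"
  have HT: "?H = ?T1 \<union> ?T2" unfolding Mid_def by (rule convex_hull_3_split_midpoint)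
  have oAB: "orient Mid A B = orient A B C / 2" and oBC: "orient Mid B C = orient A B C / 2"
    by (simp_all add: Mid_def midpoint_def orient_def field_simps)
  have D1: "orient Mid A B \<noteq> 0" and D2: "orient Mid B C \<noteq> 0" using D oAB oBC by auto
  have cf1: "convex_on ?T1 f" and cf2: "convex_on ?T2 f"
    using convex_on_subset[OF cf] HT by auto
  have "0 < orient A B C * orient A B C" using D by (metis not_real_square_gt_zero)
  then have "orient Mid B A * orient Mid B C < 0"
    by (simp add: orient_swap[of Mid B A] oAB oBC)
  then have "negligible (?T1 \<inter> ?T2)"
    using negligible_convex_hull_3_Int_opposite[of Mid B A C] by (simp add: insert_commute)
  then have "integral ?H f = integral ?T1 f + integral ?T2 f"
    unfolding HT using integral_convex_triangle_le(1)[OF D1 cf1] integral_convex_triangle_le(1)[OF D2 cf2]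
    by (intro integral_Un) (auto dest: absolutely_integrable_on_def[THEN iffD1])
  also have "\<dots> \<le> measure lebesgue ?T1 * (f Mid / 3 + 2/3 * avg_seg f A B)
                 + measure lebesgue ?T2 * (f Mid / 3 + 2/3 * avg_seg f B C)"
    by (intro add_mono integral_convex_triangle_le(2) D1 D2 cf1 cf2)
  also have "\<dots> = measure lebesgue ?H * (f Mid / 3 + (avg_seg f A B + avg_seg f B C) / 3)"
    by (simp add: measure_convex_hull_3 D D1 D2 oAB oBC algebra_simps)
  finally show ?thesis unfolding Mid_def .
qed

section \<open>The quadrilateral\<close>

lemma avg_area_Un_le:
  fixes f :: "real^2 \<Rightarrow> real"
  assumes S: "S \<in> lmeasurable" and T: "T \<in> lmeasurable" and neg: "negligible (S \<inter> T)"
    and eq: "measure lebesgue S = measure lebesgue T" and pos: "0 < measure lebesgue S"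
    and fS: "f integrable_on S" and fT: "f integrable_on T"
    and leS: "integral S f \<le> measure lebesgue S * a"
    and leT: "integral T f \<le> measure lebesgue T * b"
  shows "avg_area f (S \<union> T) \<le> (a + b) / 2"
proof -
  have "measure lebesgue (S \<union> T) = measure lebesgue S + measure lebesgue T"
    using measure_Un3_negligible[of S T "{}" "S \<union> T"] S T neg by auto
  moreover have "integral (S \<union> T) f = integral S f + integral T f"
    by (rule integral_Un[OF fS fT neg])
  ultimately show ?thesis
    using leS leT pos unfolding avg_area_def eq by (simp add: divide_le_eq algebra_simps)
qed

lemma avg_area_two_triangles_le:
  fixes f :: "real^2 \<Rightarrow> real"
  assumes opposite: "orient A C B * orient A C D < 0"
    and equal_area: "measure lebesgue (convex hull {A, B, C}) = measure lebesgue (convex hull {A, C, D})"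
    and conv1: "convex_on (convex hull {A, B, C}) f"
    and conv2: "convex_on (convex hull {A, C, D}) f"
    and le1: "integral (convex hull {A, B, C}) f \<le> measure lebesgue (convex hull {A, B, C}) * a"
    and le2: "integral (convex hull {A, C, D}) f \<le> measure lebesgue (convex hull {A, C, D}) * b"
  shows "avg_area f (convex hull {A, B, C} \<union> convex hull {A, C, D}) \<le> (a + b) / 2"
proof (rule avg_area_Un_le[OF lmeasurable_convex_hull_3 lmeasurable_convex_hull_3 _ equal_area _ _ _ le1 le2])
  have D1: "orient A B C \<noteq> 0" and D2: "orient A C D \<noteq> 0"
    using opposite orient_swap[of A C B] by auto
  show "negligible (convex hull {A, B, C} \<inter> convex hull {A, C, D})"
    using negligible_convex_hull_3_Int_opposite[OF opposite] by (simp add: insert_commute)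
  show "0 < measure lebesgue (convex hull {A, B, C})"
    using measure_convex_hull_3[OF D1] D1 by simp
  show "f integrable_on convex hull {A, B, C}" "f integrable_on convex hull {A, C, D}"
    using integral_convex_triangle_le(1)[OF D1 conv1] integral_convex_triangle_le(1)[OF D2 conv2]
    by (simp_all add: absolutely_integrable_on_def)
qed

theorem theorem3p1:
  fixes A B C D :: "real^2" and f :: "real^2 \<Rightarrow> real"
  assumes opposite: "orient A C B * orient A C D < 0"
    and equal_area: "measure lebesgue (convex hull {A, B, C}) = measure lebesgue (convex hull {A, C, D})"
    and conv1: "convex_on (convex hull {A, B, C}) f"
    and conv2: "convex_on (convex hull {A, C, D}) f"
  shows "(avg_area f (convex hull {A, B, C} \<union> convex hull {A, C, D})
           \<le> 1/3 * ((f B + f D) / 2 + 2 * avg_seg f A C)) \<and>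
          (1/3 * ((f B + f D) / 2 + 2 * avg_seg f A C) \<le> 1/3 * ((f B + f D) / 2 + f A + f C)) \<and>
          (avg_area f (convex hull {A, B, C} \<union> convex hull {A, C, D})
           \<le> f (midpoint A C) / 3
              + 2/3 * ((avg_seg f A B + avg_seg f B C + avg_seg f C D + avg_seg f D A) / 4)) \<and>
          (f (midpoint A C) / 3
              + 2/3 * ((avg_seg f A B + avg_seg f B C + avg_seg f C D + avg_seg f D A) / 4)
           \<le> f (midpoint A C) / 3 + 2/3 * ((f A + f B + f C + f D) / 4))"
proof -
  have hulls: "convex hull {A, B, C} = convex hull {B, A, C}"
    "convex hull {A, C, D} = convex hull {D, A, C}" "convex hull {A, C, D} = convex hull {C, D, A}"
    by (simp_all add: insert_commute)
  have D1: "orient B A C \<noteq> 0" "orient A B C \<noteq> 0" and D2: "orient D A C \<noteq> 0" "orient C D A \<noteq> 0"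
    using opposite orient_rotate[of A C B] orient_swap[of A C B] orient_rotate[of D A C]
      orient_rotate[of A C D] by auto
  note union = avg_area_two_triangles_le[OF opposite equal_area conv1 conv2]
  note apex_B = integral_convex_triangle_le(2)[OF D1(1) conv1[unfolded hulls(1)], folded hulls(1)]
  note apex_D = integral_convex_triangle_le(2)[OF D2(1) conv2[unfolded hulls(2)], folded hulls(2)]
  note mid_ABC = integral_convex_triangle_le_midpoint[OF D1(2) conv1]
  note mid_CDA = integral_convex_triangle_le_midpoint[OF D2(2) conv2[unfolded hulls(3)],
      folded hulls(3), unfolded midpoint_sym[of C A]]
  have "avg_seg f A C \<le> (f A + f C) / 2" "avg_seg f A B \<le> (f A + f B) / 2"
    "avg_seg f B C \<le> (f B + f C) / 2"
    by (rule avg_seg_convex_le[OF conv1]; simp add: hull_inc)+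
  moreover have "avg_seg f C D \<le> (f C + f D) / 2" "avg_seg f D A \<le> (f D + f A) / 2"
    by (rule avg_seg_convex_le[OF conv2]; simp add: hull_inc)+
  moreover note union[OF apex_B apex_D] union[OF mid_ABC mid_CDA]
  ultimately show ?thesis by (simp add: field_simps)
qed

end
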